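(* Let $n\ge 1$, $i\in\{1,\ldots,n-1\}$, and let $C$ be a set of transpositions in $S_n$ with $s_i\in C$. Put $D=C\cap s_iCs_i$. Then $\partial_i$ is defined on $H_C$, and $\partial_i(H_C)\subseteq H_D$.
   Context: Let $S_n$ be the symmetric group on $\{1,\ldots,n\}$ with $(vw)(j)=v(w(j))$, and $s_i=(i\leftrightarrow i+1)$. Let $H=\mathrm{Fun}(S_n,\mathbb{C}[t_1,\ldots,t_n])$ with pointwise operations. The star action of $w\in S_n$ on $f\in H$ is $(f*w)(v)=f(vw^{-1})$. Let $x_i\in H$ be the function $v\mapsto t_{v(i)}$. For a transposition $\tau=(i\leftrightarrow k)$, $f\in H$ satisfies condition $\tau$ if $f-f*\tau=(x_i-x_k)g$ for some $g\in H$; these form a subring $H_\tau$, and for a set $C$ of transpositions $H_C=\bigcap_{\tau\in C}H_\tau$ (with $H_\varnothing=H$). For $f\in H_{s_i}$, $\partial_i(f)$ is the unique $g\in H$ with $f-f*s_i=(x_i-x_{i+1})g$; $\partial_i$ is defined exactly on $H_{s_i}$. *)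

theory Defs
  imports Complex_Main "HOL-Library.Poly_Mapping" "HOL-Combinatorics.Permutations"
begin

text \<open>Polynomials over the complex numbers in variables t_j (j a natural number),
  in the standard Poly_Mapping representation: monomials are finitely supported
  exponent vectors.\<close>
type_synonym cpoly = "(nat \<Rightarrow>\<^sub>0 nat) \<Rightarrow>\<^sub>0 complex"

definition tvar :: "nat \<Rightarrow> cpoly" where
  "tvar j = Poly_Mapping.single (Poly_Mapping.single j 1) 1"

definition Pol :: "nat \<Rightarrow> cpoly set" where
  "Pol n = {p :: cpoly. \<forall>m \<in> Poly_Mapping.keys p. Poly_Mapping.keys m \<subseteq> {1..n}}"

text \<open>The symmetric group S_n on {1..n}; product is composition, (vw)(j) = v(w(j)).\<close>
definition Sym :: "nat \<Rightarrow> (nat \<Rightarrow> nat) set" where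
  "Sym n = {v. v permutes {1..n}}"

text \<open>H = Fun(S_n, C[t_1..t_n]); functions are represented canonically (value 0 off S_n).\<close>
definition HH :: "nat \<Rightarrow> ((nat \<Rightarrow> nat) \<Rightarrow> cpoly) set" where
  "HH n = {f. (\<forall>v \<in> Sym n. f v \<in> Pol n) \<and> (\<forall>v. v \<notin> Sym n \<longrightarrow> f v = 0)}"

definition star :: "((nat \<Rightarrow> nat) \<Rightarrow> cpoly) \<Rightarrow> (nat \<Rightarrow> nat) \<Rightarrow> ((nat \<Rightarrow> nat) \<Rightarrow> cpoly)" where
  "star f w = (\<lambda>v. f (v \<circ> inv w))"

definition xx :: "nat \<Rightarrow> nat \<Rightarrow> ((nat \<Rightarrow> nat) \<Rightarrow> cpoly)" where
  "xx n i = (\<lambda>v. if v \<in> Sym n then tvar (v i) else 0)"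

definition stranspo :: "nat \<Rightarrow> nat \<Rightarrow> nat" where
  "stranspo i = transpose i (Suc i)"

definition Transpositions :: "nat \<Rightarrow> (nat \<Rightarrow> nat) set" where
  "Transpositions n = {transpose a b | a b. a \<in> {1..n} \<and> b \<in> {1..n} \<and> a \<noteq> b}"

definition sat_cond :: "nat \<Rightarrow> (nat \<Rightarrow> nat) \<Rightarrow> ((nat \<Rightarrow> nat) \<Rightarrow> cpoly) \<Rightarrow> bool" where
  "sat_cond n \<tau> f \<longleftrightarrow> (\<exists>i k. i \<noteq> k \<and> \<tau> = transpose i k \<and>
      (\<exists>g \<in> HH n. \<forall>v. f v - star f \<tau> v = (xx n i v - xx n k v) * g v))"

definition HC :: "nat \<Rightarrow> (nat \<Rightarrow> nat) set \<Rightarrow> ((nat \<Rightarrow> nat) \<Rightarrow> cpoly) set" where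
  "HC n C = {f \<in> HH n. \<forall>\<tau> \<in> C. sat_cond n \<tau> f}"

definition ddiff :: "nat \<Rightarrow> nat \<Rightarrow> ((nat \<Rightarrow> nat) \<Rightarrow> cpoly) \<Rightarrow> ((nat \<Rightarrow> nat) \<Rightarrow> cpoly)" where
  "ddiff n i f = (THE g. g \<in> HH n \<and>
      (\<forall>v. f v - star f (stranspo i) v = (xx n i v - xx n (Suc i) v) * g v))"

end

theory Submission
  imports Defs
begin

(* Divisibility by t_p - t_q is detected by the substitution t_p := t_q. Hence f satisfies
   condition (a b) iff for every v the substitution sigma: t_v(a) := t_v(b) kills f(v) - f(v (a b)).
   Let g = d_i f and tau = (a b) in D with tau <> s_i, and apply sigma to
   f(u) - f(u s_i) = (t_u(i) - t_u(i+1)) g(u) for u = v and u = v tau. Condition tau on f identifies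
   sigma f(v) with sigma f(v tau), condition s_i tau s_i identifies sigma f(v s_i) with
   sigma f(v tau s_i), and sigma sends t_u(i) - t_u(i+1) to the same nonzero polynomial for both u,
   because {i, i+1} <> {a, b}. Cancelling gives sigma g(v) = sigma g(v tau). For tau = s_i the
   function g is even s_i-invariant. *)

definition monom_subst :: "nat \<Rightarrow> nat \<Rightarrow> (nat \<Rightarrow>\<^sub>0 nat) \<Rightarrow> (nat \<Rightarrow>\<^sub>0 nat)" where
  "monom_subst p q m = Poly_Mapping.update p 0 m + Poly_Mapping.single q (Poly_Mapping.lookup m p)"

definition var_subst :: "nat \<Rightarrow> nat \<Rightarrow> cpoly \<Rightarrow> cpoly" where
  "var_subst p q A =
     (\<Sum>m\<in>Poly_Mapping.keys A. Poly_Mapping.single (monom_subst p q m) (Poly_Mapping.lookup A m))"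

lemma lookup_monom_subst:
  "p \<noteq> q \<Longrightarrow> Poly_Mapping.lookup (monom_subst p q m) x =
     (if x = p then 0
      else if x = q then Poly_Mapping.lookup m q + Poly_Mapping.lookup m p
      else Poly_Mapping.lookup m x)"
  by (auto simp: monom_subst_def lookup_add lookup_update lookup_single)

lemma monom_subst_add: "p \<noteq> q \<Longrightarrow> monom_subst p q (m1 + m2) = monom_subst p q m1 + monom_subst p q m2"
  by (rule poly_mapping_eqI) (simp add: lookup_monom_subst lookup_add)

lemma sum_single_lookup:
  "(A::cpoly) = (\<Sum>m\<in>Poly_Mapping.keys A. Poly_Mapping.single m (Poly_Mapping.lookup A m))"
  by (rule poly_mapping_eqI) (auto simp: lookup_sum lookup_single when_def in_keys_iff)

lemma var_subst_eq_sum: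
  assumes "finite S" "Poly_Mapping.keys A \<subseteq> S"
  shows "var_subst p q A = (\<Sum>m\<in>S. Poly_Mapping.single (monom_subst p q m) (Poly_Mapping.lookup A m))"
  unfolding var_subst_def
  by (rule sum.mono_neutral_left) (use assms in \<open>auto simp: in_keys_iff\<close>)

lemma var_subst_single [simp]:
  "var_subst p q (Poly_Mapping.single m c) = Poly_Mapping.single (monom_subst p q m) c"
  by (simp add: var_subst_def)

lemma var_subst_zero [simp]: "var_subst p q 0 = 0"
  by (simp add: var_subst_def)

lemma var_subst_add: "var_subst p q (A + B) = var_subst p q A + var_subst p q B"
proof -
  let ?S = "Poly_Mapping.keys A \<union> Poly_Mapping.keys B"
  have "var_subst p q (A + B) =
      (\<Sum>m\<in>?S. Poly_Mapping.single (monom_subst p q m) (Poly_Mapping.lookup (A + B) m))"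
    by (rule var_subst_eq_sum) (use keys_add[of A B] in auto)
  also have "\<dots> = (\<Sum>m\<in>?S. Poly_Mapping.single (monom_subst p q m) (Poly_Mapping.lookup A m))
      + (\<Sum>m\<in>?S. Poly_Mapping.single (monom_subst p q m) (Poly_Mapping.lookup B m))"
    by (simp add: lookup_add single_add sum.distrib)
  also have "\<dots> = var_subst p q A + var_subst p q B"
    by (subst (1 2) var_subst_eq_sum[symmetric]) auto
  finally show ?thesis .
qed

lemma var_subst_diff: "var_subst p q (A - B) = var_subst p q A - var_subst p q B"
  using var_subst_add[of p q "A - B" B] by (simp add: eq_diff_eq)

lemma var_subst_sum: "var_subst p q (sum F S) = (\<Sum>x\<in>S. var_subst p q (F x))"
  by (induction S rule: infinite_finite_induct) (auto simp: var_subst_add)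

lemma var_subst_mult:
  assumes "p \<noteq> q"
  shows "var_subst p q (A * B) = var_subst p q A * var_subst p q B"
proof -
  let ?K = "Poly_Mapping.keys A" and ?L = "Poly_Mapping.keys B"
  have "A * B = (\<Sum>m1\<in>?K. \<Sum>m2\<in>?L.
      Poly_Mapping.single (m1 + m2) (Poly_Mapping.lookup A m1 * Poly_Mapping.lookup B m2))"
    by (subst (1) sum_single_lookup, subst (2) sum_single_lookup) (simp add: sum_product mult_single)
  then have "var_subst p q (A * B) = (\<Sum>m1\<in>?K. \<Sum>m2\<in>?L.
      Poly_Mapping.single (monom_subst p q m1 + monom_subst p q m2)
        (Poly_Mapping.lookup A m1 * Poly_Mapping.lookup B m2))"
    by (simp add: var_subst_sum monom_subst_add assms)
  also have "\<dots> = var_subst p q A * var_subst p q B"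
    by (simp add: var_subst_def sum_product mult_single)
  finally show ?thesis .
qed

lemma tvar_eq_iff [simp]: "tvar a = tvar b \<longleftrightarrow> a = b"
proof
  assume "tvar a = tvar b"
  then have "Poly_Mapping.lookup (tvar a) (Poly_Mapping.single a 1) =
      Poly_Mapping.lookup (tvar b) (Poly_Mapping.single a 1)"
    by simp
  then have "Poly_Mapping.single b (1::nat) = Poly_Mapping.single a 1"
    by (simp add: tvar_def lookup_single when_def split: if_splits)
  then have "Poly_Mapping.lookup (Poly_Mapping.single b (1::nat)) a =
      Poly_Mapping.lookup (Poly_Mapping.single a 1) a"
    by simp
  then show "a = b"
    by (simp add: lookup_single when_def split: if_splits)
qed simp

lemma var_subst_tvar: "p \<noteq> q \<Longrightarrow> var_subst p q (tvar j) = tvar (if j = p then q else j)"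
  unfolding tvar_def var_subst_single
  by (rule arg_cong[where f="\<lambda>m. Poly_Mapping.single m 1"], rule poly_mapping_eqI)
     (auto simp: lookup_monom_subst lookup_single when_def)

lemma tvar_power: "tvar p ^ k = Poly_Mapping.single (Poly_Mapping.single p k) 1"
  by (induction k) (auto simp: tvar_def mult_single single_add[symmetric] add.commute)

definition monom_quot :: "nat \<Rightarrow> nat \<Rightarrow> (nat \<Rightarrow>\<^sub>0 nat) \<Rightarrow> complex \<Rightarrow> cpoly" where
  "monom_quot p q m c = Poly_Mapping.single (Poly_Mapping.update p 0 m) c *
     (\<Sum>k<Poly_Mapping.lookup m p. tvar q ^ (Poly_Mapping.lookup m p - Suc k) * tvar p ^ k)"

definition var_quot :: "nat \<Rightarrow> nat \<Rightarrow> cpoly \<Rightarrow> cpoly" where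
  "var_quot p q A = (\<Sum>m\<in>Poly_Mapping.keys A. monom_quot p q m (Poly_Mapping.lookup A m))"

lemma single_diff_monom_subst:
  assumes "p \<noteq> q"
  shows "Poly_Mapping.single m c - Poly_Mapping.single (monom_subst p q m) c =
    (tvar p - tvar q) * monom_quot p q m c"
proof -
  let ?k = "Poly_Mapping.lookup m p" and ?m0 = "Poly_Mapping.update p 0 m"
  have m: "m = ?m0 + Poly_Mapping.single p ?k"
    by (rule poly_mapping_eqI) (auto simp: lookup_add lookup_update lookup_single when_def)
  have "Poly_Mapping.single m c = Poly_Mapping.single ?m0 c * tvar p ^ ?k"
    by (subst m) (simp add: tvar_power mult_single)
  moreover have "Poly_Mapping.single (monom_subst p q m) c = Poly_Mapping.single ?m0 c * tvar q ^ ?k"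
    by (simp add: tvar_power mult_single monom_subst_def)
  ultimately have "Poly_Mapping.single m c - Poly_Mapping.single (monom_subst p q m) c =
      Poly_Mapping.single ?m0 c * (tvar p ^ ?k - tvar q ^ ?k)"
    by (simp add: right_diff_distrib)
  also have "\<dots> = (tvar p - tvar q) * monom_quot p q m c"
    by (simp add: power_diff_sumr2 monom_quot_def)
  finally show ?thesis .
qed

lemma diff_var_subst_eq: "p \<noteq> q \<Longrightarrow> A - var_subst p q A = (tvar p - tvar q) * var_quot p q A"
  by (subst (1) sum_single_lookup)
     (simp add: var_subst_def var_quot_def single_diff_monom_subst sum_distrib_left flip: sum_subtractf)

lemma var_subst_eq_0_imp_eq_mult:
  "p \<noteq> q \<Longrightarrow> var_subst p q A = 0 \<Longrightarrow> A = (tvar p - tvar q) * var_quot p q A"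
  using diff_var_subst_eq[of p q A] by simp

lemma Pol_0 [simp]: "0 \<in> Pol n"
  by (simp add: Pol_def)

lemma Pol_1 [simp]: "1 \<in> Pol n"
  by (simp add: Pol_def)

lemma Pol_add: "A \<in> Pol n \<Longrightarrow> B \<in> Pol n \<Longrightarrow> A + B \<in> Pol n"
  using keys_add[of A B] by (auto simp: Pol_def)

lemma Pol_diff: "A \<in> Pol n \<Longrightarrow> B \<in> Pol n \<Longrightarrow> A - B \<in> Pol n"
  using keys_diff[of A B] by (auto simp: Pol_def)

lemma Pol_mult:
  assumes "A \<in> Pol n" "B \<in> Pol n"
  shows "A * B \<in> Pol n"
  unfolding Pol_def
proof (intro CollectI ballI)
  fix m assume "m \<in> Poly_Mapping.keys (A * B)"
  then obtain a b where "m = a + b" "a \<in> Poly_Mapping.keys A" "b \<in> Poly_Mapping.keys B"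
    using keys_mult by blast
  with assms keys_add[of a b] show "Poly_Mapping.keys m \<subseteq> {1..n}"
    unfolding Pol_def by blast
qed

lemma Pol_sum: "(\<And>x. x \<in> S \<Longrightarrow> F x \<in> Pol n) \<Longrightarrow> sum F S \<in> Pol n"
  by (induction S rule: infinite_finite_induct) (auto intro: Pol_add)

lemma Pol_power: "A \<in> Pol n \<Longrightarrow> A ^ k \<in> Pol n"
  by (induction k) (auto intro: Pol_mult)

lemma Pol_single: "Poly_Mapping.keys m \<subseteq> {1..n} \<Longrightarrow> Poly_Mapping.single m c \<in> Pol n"
  by (simp add: Pol_def)

lemma Pol_tvar: "j \<in> {1..n} \<Longrightarrow> tvar j \<in> Pol n"
  by (simp add: Pol_def tvar_def)

lemma Pol_var_quot: "A \<in> Pol n \<Longrightarrow> p \<in> {1..n} \<Longrightarrow> q \<in> {1..n} \<Longrightarrow> var_quot p q A \<in> Pol n"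
  unfolding var_quot_def monom_quot_def
  by (intro Pol_sum Pol_mult Pol_single Pol_power Pol_tvar) (auto simp: Pol_def keys_update)

lemma transpose_eq_transpose_iff:
  "a \<noteq> b \<Longrightarrow> transpose a b = transpose c d \<longleftrightarrow> (c = a \<and> d = b) \<or> (c = b \<and> d = a)"
  by (metis transpose_commute transpose_eq_iff)

lemma transpose_conj_transpose:
  "transpose i j \<circ> transpose a b \<circ> transpose i j = transpose (transpose i j a) (transpose i j b)"
  by (auto simp: fun_eq_iff transpose_def)

lemma Sym_inj: "v \<in> Sym n \<Longrightarrow> v x = v y \<longleftrightarrow> x = y"
  by (auto simp: Sym_def dest: permutes_inj injD)

lemma Sym_in: "v \<in> Sym n \<Longrightarrow> x \<in> {1..n} \<Longrightarrow> v x \<in> {1..n}"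
  unfolding Sym_def by (simp add: permutes_in_image del: atLeastAtMost_iff)

lemma comp_transpose_in_Sym_iff:
  assumes "a \<in> {1..n}" "b \<in> {1..n}"
  shows "v \<circ> transpose a b \<in> Sym n \<longleftrightarrow> v \<in> Sym n"
proof -
  have "v \<circ> transpose a b \<in> Sym n" if "v \<in> Sym n" for v
    using that assms unfolding Sym_def by (simp add: permutes_compose permutes_swap_id del: atLeastAtMost_iff)
  from this[of v] this[of "v \<circ> transpose a b"] show ?thesis
    by (auto simp: comp_assoc)
qed

lemma HH_on: "g \<in> HH n \<Longrightarrow> v \<in> Sym n \<Longrightarrow> g v \<in> Pol n"
  by (simp add: HH_def)

lemma HH_off: "g \<in> HH n \<Longrightarrow> v \<notin> Sym n \<Longrightarrow> g v = 0"
  by (simp add: HH_def)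

lemma xx_Sym: "v \<in> Sym n \<Longrightarrow> xx n i v = tvar (v i)"
  by (simp add: xx_def)

lemma star_transpose: "star f (transpose a b) v = f (v \<circ> transpose a b)"
  by (simp add: star_def)

lemma transpose_quotient_exists:
  assumes ab: "a \<noteq> b" "a \<in> {1..n}" "b \<in> {1..n}" and f: "f \<in> HH n"
    and vanish: "\<forall>v\<in>Sym n. var_subst (v a) (v b) (f v - f (v \<circ> transpose a b)) = 0"
  shows "\<exists>g\<in>HH n. \<forall>v. f v - f (v \<circ> transpose a b) = (xx n a v - xx n b v) * g v"
proof -
  define g where "g v = (if v \<in> Sym n then var_quot (v a) (v b) (f v - f (v \<circ> transpose a b)) else 0)"
    for v
  have "g \<in> HH n"
    unfolding HH_def
  proof (intro CollectI conjI ballI allI impI)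
    fix v assume v: "v \<in> Sym n"
    with ab have "f v - f (v \<circ> transpose a b) \<in> Pol n"
      by (intro Pol_diff HH_on[OF f]) (simp_all add: comp_transpose_in_Sym_iff)
    with v show "g v \<in> Pol n"
      unfolding g_def using Sym_in[OF v ab(2)] Sym_in[OF v ab(3)] by (simp add: Pol_var_quot)
  next
    fix v assume "v \<notin> Sym n"
    then show "g v = 0"
      by (simp add: g_def)
  qed
  moreover have "f v - f (v \<circ> transpose a b) = (xx n a v - xx n b v) * g v" for v
  proof (cases "v \<in> Sym n")
    case True
    with ab have vab: "v a \<noteq> v b"
      by (simp add: Sym_inj)
    from True vanish have "var_subst (v a) (v b) (f v - f (v \<circ> transpose a b)) = 0"
      by blast
    moreover have "g v = var_quot (v a) (v b) (f v - f (v \<circ> transpose a b))"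
      using True by (simp add: g_def)
    ultimately show ?thesis
      unfolding xx_Sym[OF True] by (metis var_subst_eq_0_imp_eq_mult[OF vab])
  next
    case False
    with ab have "v \<circ> transpose a b \<notin> Sym n"
      by (simp add: comp_transpose_in_Sym_iff)
    with False show ?thesis
      by (simp add: g_def xx_def HH_off[OF f])
  qed
  ultimately show ?thesis
    by blast
qed

lemma sat_cond_transpose_iff:
  assumes ab: "a \<noteq> b" "a \<in> {1..n}" "b \<in> {1..n}" and f: "f \<in> HH n"
  shows "sat_cond n (transpose a b) f \<longleftrightarrow>
    (\<forall>v\<in>Sym n. var_subst (v a) (v b) (f v - f (v \<circ> transpose a b)) = 0)"
proof
  assume "sat_cond n (transpose a b) f"
  then obtain c d g where cd: "transpose a b = transpose c d"
    and eq: "\<forall>v. f v - f (v \<circ> transpose a b) = (xx n c v - xx n d v) * g v"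
    unfolding sat_cond_def star_transpose by blast
  show "\<forall>v\<in>Sym n. var_subst (v a) (v b) (f v - f (v \<circ> transpose a b)) = 0"
  proof
    fix v assume v: "v \<in> Sym n"
    have "var_subst (v a) (v b) (xx n c v - xx n d v) = 0"
      using cd ab v by (auto simp: transpose_eq_transpose_iff xx_Sym var_subst_diff var_subst_tvar Sym_inj)
    with v ab show "var_subst (v a) (v b) (f v - f (v \<circ> transpose a b)) = 0"
      by (simp add: eq var_subst_mult Sym_inj)
  qed
next
  assume "\<forall>v\<in>Sym n. var_subst (v a) (v b) (f v - f (v \<circ> transpose a b)) = 0"
  from transpose_quotient_exists[OF ab f this] show "sat_cond n (transpose a b) f"
    using ab unfolding sat_cond_def by (auto simp: star_transpose)
qed

lemma sat_cond_transpose_quotient: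
  assumes "a \<noteq> b" "a \<in> {1..n}" "b \<in> {1..n}" "f \<in> HH n" "sat_cond n (transpose a b) f"
  shows "\<exists>g\<in>HH n. \<forall>v. f v - f (v \<circ> transpose a b) = (xx n a v - xx n b v) * g v"
  using assms by (intro transpose_quotient_exists) (simp_all add: sat_cond_transpose_iff)

lemma ddiff_eqI:
  assumes g: "g \<in> HH n"
    and eq: "\<And>v. f v - f (v \<circ> transpose i (Suc i)) = (xx n i v - xx n (Suc i) v) * g v"
  shows "ddiff n i f = g"
  unfolding ddiff_def
proof (rule the_equality)
  show "g \<in> HH n \<and> (\<forall>v. f v - star f (stranspo i) v = (xx n i v - xx n (Suc i) v) * g v)"
    using g eq by (simp add: star_transpose stranspo_def)
next
  fix h assume h: "h \<in> HH n \<and> (\<forall>v. f v - star f (stranspo i) v = (xx n i v - xx n (Suc i) v) * h v)"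
  show "h = g"
  proof
    fix v
    show "h v = g v"
    proof (cases "v \<in> Sym n")
      case True
      then have "(xx n i v - xx n (Suc i) v) * h v = (xx n i v - xx n (Suc i) v) * g v"
        using eq[of v] h by (simp add: star_transpose stranspo_def)
      with True show ?thesis by (simp add: xx_Sym Sym_inj)
    next
      case False
      with g h show ?thesis
        using HH_off by metis
    qed
  qed
qed

lemma transpose_quotient_invariant:
  assumes ab: "a \<in> {1..n}" "b \<in> {1..n}" and g: "g \<in> HH n"
    and eq: "\<And>v. f v - f (v \<circ> transpose a b) = (xx n a v - xx n b v) * g v"
  shows "g (v \<circ> transpose a b) = g v"
proof (cases "v \<in> Sym n")
  case True
  let ?w = "v \<circ> transpose a b"
  have w: "?w \<in> Sym n" and ww: "?w \<circ> transpose a b = v"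
    using True ab by (simp_all add: comp_transpose_in_Sym_iff comp_assoc)
  have xx_w: "xx n a ?w = xx n b v" "xx n b ?w = xx n a v"
    using True w by (simp_all add: xx_Sym)
  have "(xx n a v - xx n b v) * g ?w = - ((xx n b v - xx n a v) * g ?w)"
    by (simp add: algebra_simps)
  also have "\<dots> = f v - f ?w"
    using eq[of ?w] ww xx_w by (metis minus_diff_eq)
  also have "\<dots> = (xx n a v - xx n b v) * g v"
    by (fact eq)
  finally show ?thesis
    using True by (auto simp: xx_Sym Sym_inj)
next
  case False
  with ab have "v \<circ> transpose a b \<notin> Sym n"
    by (simp add: comp_transpose_in_Sym_iff)
  with False show ?thesis
    by (simp add: HH_off[OF g])
qed

lemma quotient_sat_cond_transpose:
  assumes ij: "i \<noteq> j" "i \<in> {1..n}" "j \<in> {1..n}"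
    and ab: "a \<noteq> b" "a \<in> {1..n}" "b \<in> {1..n}"
    and f: "f \<in> HH n" and g: "g \<in> HH n"
    and quot: "\<And>v. f v - f (v \<circ> transpose i j) = (xx n i v - xx n j v) * g v"
    and f_ab: "sat_cond n (transpose a b) f"
    and f_conj: "sat_cond n (transpose (transpose i j a) (transpose i j b)) f"
  shows "sat_cond n (transpose a b) g"
proof (cases "transpose a b = transpose i j")
  case True
  then have "g (v \<circ> transpose a b) = g v" for v
    by (simp only: transpose_quotient_invariant[OF ij(2,3) g quot])
  with ab g show ?thesis
    by (simp add: sat_cond_transpose_iff)
next
  case False
  let ?s = "transpose i j" and ?\<tau> = "transpose a b"
  have "var_subst (v a) (v b) (g v - g (v \<circ> ?\<tau>)) = 0" if v: "v \<in> Sym n" for v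
  proof -
    let ?\<sigma> = "var_subst (v a) (v b)" and ?w = "v \<circ> ?\<tau>"
    have vab: "v a \<noteq> v b"
      using v ab by (simp add: Sym_inj)
    have w: "?w \<in> Sym n"
      using v ab by (simp add: comp_transpose_in_Sym_iff)
    have \<sigma>_xx: "?\<sigma> (xx n k ?w) = ?\<sigma> (xx n k v)" for k
      using v w vab by (auto simp: xx_Sym var_subst_tvar Sym_inj transpose_def)
    have \<sigma>_ij: "?\<sigma> (xx n i v - xx n j v) \<noteq> 0"
      using v vab ij(1) False by (auto simp: xx_Sym var_subst_diff var_subst_tvar Sym_inj transpose_commute)
    have f_v: "?\<sigma> (f v) = ?\<sigma> (f ?w)"
      using f_ab v ab f by (simp add: sat_cond_transpose_iff var_subst_diff)
    have f_vs: "?\<sigma> (f (v \<circ> ?s)) = ?\<sigma> (f (?w \<circ> ?s))"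
    proof -
      have sab: "?s a \<noteq> ?s b" "?s a \<in> {1..n}" "?s b \<in> {1..n}"
        using ab ij by (auto simp: transpose_def)
      have "v \<circ> ?s \<in> Sym n"
        using v ij by (simp add: comp_transpose_in_Sym_iff)
      with f_conj have "var_subst ((v \<circ> ?s) (?s a)) ((v \<circ> ?s) (?s b))
          (f (v \<circ> ?s) - f (v \<circ> ?s \<circ> transpose (?s a) (?s b))) = 0"
        using sat_cond_transpose_iff[OF sab f] by blast
      moreover have "v \<circ> ?s \<circ> transpose (?s a) (?s b) = ?w \<circ> ?s"
        by (simp add: fun_eq_iff transpose_def)
      ultimately show ?thesis
        by (simp add: var_subst_diff)
    qed
    have "?\<sigma> (xx n i v - xx n j v) * ?\<sigma> (g v) = ?\<sigma> (f v) - ?\<sigma> (f (v \<circ> ?s))"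
      using quot[of v] vab by (simp add: var_subst_mult flip: var_subst_diff)
    also have "\<dots> = ?\<sigma> (f ?w) - ?\<sigma> (f (?w \<circ> ?s))"
      using f_v f_vs by simp
    also have "\<dots> = ?\<sigma> (xx n i ?w - xx n j ?w) * ?\<sigma> (g ?w)"
      using quot[of ?w] vab by (simp add: var_subst_mult flip: var_subst_diff)
    also have "\<dots> = ?\<sigma> (xx n i v - xx n j v) * ?\<sigma> (g ?w)"
      using \<sigma>_xx by (simp add: var_subst_diff)
    finally show ?thesis
      using \<sigma>_ij by (simp add: var_subst_diff)
  qed
  then show ?thesis
    using ab g by (simp add: sat_cond_transpose_iff)
qed

lemma quotient_sat_cond:
  assumes ij: "i \<noteq> j" "i \<in> {1..n}" "j \<in> {1..n}"
    and f: "f \<in> HH n" and g: "g \<in> HH n"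
    and quot: "\<And>v. f v - f (v \<circ> transpose i j) = (xx n i v - xx n j v) * g v"
    and \<tau>: "\<tau> \<in> Transpositions n" "sat_cond n \<tau> f"
    and conj: "sat_cond n (transpose i j \<circ> \<tau> \<circ> transpose i j) f"
  shows "sat_cond n \<tau> g"
proof -
  obtain a b where ab: "a \<noteq> b" "a \<in> {1..n}" "b \<in> {1..n}" and \<tau>_ab: "\<tau> = transpose a b"
    using \<tau>(1) unfolding Transpositions_def by blast
  from conj have "sat_cond n (transpose (transpose i j a) (transpose i j b)) f"
    by (simp add: \<tau>_ab transpose_conj_transpose)
  with \<tau>(2) show ?thesis
    unfolding \<tau>_ab by (rule quotient_sat_cond_transpose[OF ij ab f g quot])
qed

theorem corollary1:
  fixes n i :: nat and C :: "(nat \<Rightarrow> nat) set"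
  assumes "n \<ge> 1" and "1 \<le> i" and "i < n"
    and "C \<subseteq> Transpositions n"
    and "stranspo i \<in> C"
  defines "D \<equiv> C \<inter> (\<lambda>\<tau>. stranspo i \<circ> \<tau> \<circ> stranspo i) ` C"
  shows "HC n C \<subseteq> HC n {stranspo i} \<and> (\<forall>f \<in> HC n C. ddiff n i f \<in> HC n D)"
proof -
  let ?s = "stranspo i"
  have i: "i \<noteq> Suc i" "i \<in> {1..n}" "Suc i \<in> {1..n}"
    using assms by auto
  have "ddiff n i f \<in> HC n D" if "f \<in> HC n C" for f
  proof -
    have f: "f \<in> HH n" and f_C: "\<And>\<tau>. \<tau> \<in> C \<Longrightarrow> sat_cond n \<tau> f"
      using that by (auto simp: HC_def)
    obtain g where g: "g \<in> HH n"
      and quot: "\<And>v. f v - f (v \<circ> transpose i (Suc i)) = (xx n i v - xx n (Suc i) v) * g v"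
      using sat_cond_transpose_quotient[OF i f] f_C[OF assms(5)] by (auto simp: stranspo_def)
    have "sat_cond n \<tau> g" if "\<tau> \<in> D" for \<tau>
    proof -
      obtain \<tau>' where \<tau>: "\<tau> \<in> C" and \<tau>': "\<tau>' \<in> C" "\<tau> = ?s \<circ> \<tau>' \<circ> ?s"
        using \<open>\<tau> \<in> D\<close> unfolding D_def by blast
      have "?s \<circ> \<tau> \<circ> ?s = \<tau>'"
        using \<tau>'(2) by (simp add: fun_eq_iff stranspo_def)
      with \<tau>'(1) f_C have "sat_cond n (transpose i (Suc i) \<circ> \<tau> \<circ> transpose i (Suc i)) f"
        by (simp add: stranspo_def)
      with \<tau> assms(4) f_C show ?thesis
        using quotient_sat_cond[OF i f g quot] by blast
    qed
    with ddiff_eqI[OF g quot] g show ?thesis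
      by (simp add: HC_def)
  qed
  then show ?thesis
    using assms(5) by (auto simp: HC_def)
qed

end
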